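(* Let $\Theta$ be a variety of universal algebras and let $H$ be a finitely generated free $\Theta$-algebra. If $H$ is weakly homogeneous, then $H$ is logically perfect.
   Context: $X^0=\{x_1,x_2,\dots\}$ is an infinite set of variables; for finite $X\subset X^0$, $W(X)$ is the free $\Theta$-algebra on $X$; homomorphisms $W(X)\to H$ are called points. For each finite $X$, the set $\Phi(X)$ of formulas of sort $X$ is defined inductively: equalities $w\equiv w'$ ($w,w'\in W(X)$) are in $\Phi(X)$; $\Phi(X)$ is closed under $\neg,\vee,\wedge$ and $\exists x$ for $x\in X$; and for every homomorphism $s:W(X)\to W(Y)$ and $u\in\Phi(X)$, $s_*u\in\Phi(Y)$. Values $Val^X_H(u)\subseteq\mathrm{Hom}(W(X),H)$: $Val^X_H(w\equiv w')=\{\mu:\mu(w)=\mu(w')\}$; $\mu\in Val^X_H(\exists x\,u)$ iff some point $\nu$ agreeing with $\mu$ on $X\setminus\{x\}$ lies in $Val^X_H(u)$; $\vee,\wedge,\neg$ are union, intersection, complement; $\mu\in Val^Y_H(s_*u)$ iff $\mu\circ s\in Val^X_H(u)$. The logical kernel of a point $\mu:W(X)\to H$ is $LKer(\mu)=\{u\in\Phi(X):\mu\in Val^X_H(u)\}$. An algebra $H$ is logically perfect if for every finite $X$ and every two points $\mu,\nu:W(X)\to H$ with $LKer(\mu)=LKer(\nu)$ there is an automorphism $\varphi$ of $H$ with $\mu=\varphi\circ\nu$. An algebra $H$ is weakly homogeneous if for every isomorphism $\varphi:A\to B$ between finitely generated subalgebras $A,B$ of $H$ such that both $\varphi$ and $\varphi^{-1}:B\to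 A$ extend to endomorphisms of $H$, the map $\varphi$ extends to an automorphism of $H$. *)

theory Defs
  imports Main
begin

text \<open>Variables are the naturals (X0 = {x_1, x_2, ...} is the type nat).
A variety Theta is given by a set E of defining identities (pairs of terms).\<close>

datatype 'f trm = V nat | F 'f "'f trm list"

fun wf_trm :: "('f \<Rightarrow> nat) \<Rightarrow> nat set \<Rightarrow> 'f trm \<Rightarrow> bool" where
  "wf_trm ar X (V n) = (n \<in> X)"
| "wf_trm ar X (F f ts) = (length ts = ar f \<and> (\<forall>t\<in>set ts. wf_trm ar X t))"

fun subst :: "(nat \<Rightarrow> 'f trm) \<Rightarrow> 'f trm \<Rightarrow> 'f trm" where
  "subst \<sigma> (V n) = \<sigma> n"
| "subst \<sigma> (F f ts) = F f (map (subst \<sigma>) ts)"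

text \<open>Equational consequence (Birkhoff's rules) of the identities E.\<close>
inductive deriv :: "('f \<Rightarrow> nat) \<Rightarrow> ('f trm \<times> 'f trm) set \<Rightarrow> 'f trm \<Rightarrow> 'f trm \<Rightarrow> bool"
  for ar E where
  ax: "(l, r) \<in> E \<Longrightarrow> (\<forall>n. wf_trm ar UNIV (\<sigma> n)) \<Longrightarrow> deriv ar E (subst \<sigma> l) (subst \<sigma> r)"
| refl: "wf_trm ar UNIV t \<Longrightarrow> deriv ar E t t"
| sym: "deriv ar E s t \<Longrightarrow> deriv ar E t s"
| trans: "deriv ar E s t \<Longrightarrow> deriv ar E t u \<Longrightarrow> deriv ar E s u"
| cong: "length ts = ar f \<Longrightarrow> list_all2 (deriv ar E) ts ts' \<Longrightarrow> deriv ar E (F f ts) (F f ts')"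

record ('f, 'a) alg =
  carrier :: "'a set"
  op :: "'f \<Rightarrow> 'a list \<Rightarrow> 'a"

text \<open>Homomorphisms are taken extensional (undefined outside the carrier).\<close>
definition hom :: "('f \<Rightarrow> nat) \<Rightarrow> ('f, 'a) alg \<Rightarrow> ('f, 'b) alg \<Rightarrow> ('a \<Rightarrow> 'b) set" where
  "hom ar A B = {h. (\<forall>x. x \<notin> carrier A \<longrightarrow> h x = undefined)
     \<and> (\<forall>x\<in>carrier A. h x \<in> carrier B)
     \<and> (\<forall>f cs. length cs = ar f \<and> set cs \<subseteq> carrier A \<longrightarrow>
            h (op A f cs) = op B f (map h cs))}"

definition iso :: "('f \<Rightarrow> nat) \<Rightarrow> ('f, 'a) alg \<Rightarrow> ('f, 'b) alg \<Rightarrow> ('a \<Rightarrow> 'b) set" where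
  "iso ar A B = {h. h \<in> hom ar A B \<and> bij_betw h (carrier A) (carrier B)}"

definition automorphism :: "('f \<Rightarrow> nat) \<Rightarrow> ('f, 'a) alg \<Rightarrow> ('a \<Rightarrow> 'a) \<Rightarrow> bool" where
  "automorphism ar H \<phi> \<longleftrightarrow> \<phi> \<in> iso ar H H"

text \<open>W(X): X-terms modulo equational consequence of E.\<close>
definition cls :: "('f \<Rightarrow> nat) \<Rightarrow> ('f trm \<times> 'f trm) set \<Rightarrow> nat set \<Rightarrow> 'f trm \<Rightarrow> 'f trm set" where
  "cls ar E X t = {t'. wf_trm ar X t' \<and> deriv ar E t t'}"

definition W :: "('f \<Rightarrow> nat) \<Rightarrow> ('f trm \<times> 'f trm) set \<Rightarrow> nat set \<Rightarrow> ('f, 'f trm set) alg" where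
  "W ar E X = \<lparr> carrier = {cls ar E X t | t. wf_trm ar X t},
     op = (\<lambda>f cs. if length cs = ar f \<and> set cs \<subseteq> {cls ar E X t | t. wf_trm ar X t}
                  then cls ar E X (F f (map (\<lambda>c. SOME t. t \<in> c) cs)) else undefined) \<rparr>"

datatype 'f form =
    Eq "'f trm set" "'f trm set"
  | Neg "'f form"
  | Disj "'f form" "'f form"
  | Conj "'f form" "'f form"
  | Exi nat "'f form"
  | Sub "nat set" "'f trm set \<Rightarrow> 'f trm set" "'f form"  \<comment> \<open>Sub X s u = s_* u for s: W(X) \<rightarrow> W(Y)\<close>

inductive phi :: "('f \<Rightarrow> nat) \<Rightarrow> ('f trm \<times> 'f trm) set \<Rightarrow> nat set \<Rightarrow> 'f form \<Rightarrow> bool"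
  for ar E where
  eq: "finite X \<Longrightarrow> w \<in> carrier (W ar E X) \<Longrightarrow> w' \<in> carrier (W ar E X) \<Longrightarrow> phi ar E X (Eq w w')"
| neg: "phi ar E X u \<Longrightarrow> phi ar E X (Neg u)"
| disj: "phi ar E X u \<Longrightarrow> phi ar E X v \<Longrightarrow> phi ar E X (Disj u v)"
| conj: "phi ar E X u \<Longrightarrow> phi ar E X v \<Longrightarrow> phi ar E X (Conj u v)"
| exi: "phi ar E X u \<Longrightarrow> x \<in> X \<Longrightarrow> phi ar E X (Exi x u)"
| sub: "finite Y \<Longrightarrow> s \<in> hom ar (W ar E X) (W ar E Y) \<Longrightarrow> phi ar E X u \<Longrightarrow> phi ar E Y (Sub X s u)"

primrec val :: "('f \<Rightarrow> nat) \<Rightarrow> ('f trm \<times> 'f trm) set \<Rightarrow> ('f, 'a) alg \<Rightarrow> nat set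
    \<Rightarrow> 'f form \<Rightarrow> ('f trm set \<Rightarrow> 'a) set" where
  "val ar E H X (Eq w w') = {\<mu> \<in> hom ar (W ar E X) H. \<mu> w = \<mu> w'}"
| "val ar E H X (Neg u) = hom ar (W ar E X) H - val ar E H X u"
| "val ar E H X (Disj u v) = val ar E H X u \<union> val ar E H X v"
| "val ar E H X (Conj u v) = val ar E H X u \<inter> val ar E H X v"
| "val ar E H X (Exi x u) = {\<mu> \<in> hom ar (W ar E X) H. \<exists>\<nu> \<in> hom ar (W ar E X) H.
      (\<forall>y \<in> X - {x}. \<nu> (cls ar E X (V y)) = \<mu> (cls ar E X (V y))) \<and> \<nu> \<in> val ar E H X u}"
| "val ar E H Y (Sub X s u) = {\<mu> \<in> hom ar (W ar E Y) H.
      (\<lambda>w. if w \<in> carrier (W ar E X) then \<mu> (s w) else undefined) \<in> val ar E H X u}"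

definition LKer :: "('f \<Rightarrow> nat) \<Rightarrow> ('f trm \<times> 'f trm) set \<Rightarrow> ('f, 'a) alg \<Rightarrow> nat set
    \<Rightarrow> ('f trm set \<Rightarrow> 'a) \<Rightarrow> 'f form set" where
  "LKer ar E H X \<mu> = {u. phi ar E X u \<and> \<mu> \<in> val ar E H X u}"

definition logically_perfect :: "('f \<Rightarrow> nat) \<Rightarrow> ('f trm \<times> 'f trm) set \<Rightarrow> ('f, 'a) alg \<Rightarrow> bool" where
  "logically_perfect ar E H \<longleftrightarrow>
    (\<forall>X. finite X \<longrightarrow> (\<forall>\<mu> \<in> hom ar (W ar E X) H. \<forall>\<nu> \<in> hom ar (W ar E X) H.
       LKer ar E H X \<mu> = LKer ar E H X \<nu> \<longrightarrow>
       (\<exists>\<phi>. automorphism ar H \<phi> \<and> (\<forall>w \<in> carrier (W ar E X). \<mu> w = \<phi> (\<nu> w)))))"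

inductive_set generated :: "('f \<Rightarrow> nat) \<Rightarrow> ('f, 'a) alg \<Rightarrow> 'a set \<Rightarrow> 'a set"
  for ar H S where
  base: "a \<in> S \<Longrightarrow> a \<in> generated ar H S"
| opr: "length cs = ar f \<Longrightarrow> \<forall>c\<in>set cs. c \<in> generated ar H S \<Longrightarrow> op H f cs \<in> generated ar H S"

definition fg_subalg :: "('f \<Rightarrow> nat) \<Rightarrow> ('f, 'a) alg \<Rightarrow> 'a set \<Rightarrow> bool" where
  "fg_subalg ar H A \<longleftrightarrow> (\<exists>S. finite S \<and> S \<subseteq> carrier H \<and> A = generated ar H S)"

definition subalg :: "('f, 'a) alg \<Rightarrow> 'a set \<Rightarrow> ('f, 'a) alg" where
  "subalg H A = \<lparr> carrier = A, op = op H \<rparr>"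

definition weakly_homogeneous :: "('f \<Rightarrow> nat) \<Rightarrow> ('f, 'a) alg \<Rightarrow> bool" where
  "weakly_homogeneous ar H \<longleftrightarrow>
    (\<forall>A B \<phi>. fg_subalg ar H A \<and> fg_subalg ar H B \<and> \<phi> \<in> iso ar (subalg H A) (subalg H B)
       \<and> (\<exists>\<psi> \<in> hom ar H H. \<forall>a \<in> A. \<psi> a = \<phi> a)
       \<and> (\<exists>\<psi> \<in> hom ar H H. \<forall>b \<in> B. \<psi> b = inv_into A \<phi> b)
     \<longrightarrow> (\<exists>\<psi>. automorphism ar H \<psi> \<and> (\<forall>a \<in> A. \<psi> a = \<phi> a)))"

end

theory Submission
  imports Defs
begin

text \<open>Fix an isomorphism \<open>\<theta> : W(X\<^sub>0) \<rightarrow> H\<close> and points \<open>\<mu>, \<nu> : W(X) \<rightarrow> H\<close> with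
  \<open>LKer(\<nu>) \<subseteq> LKer(\<mu>)\<close>. Write each \<open>\<nu>(x)\<close> as \<open>\<theta>(t\<^sub>x)\<close> with a term \<open>t\<^sub>x\<close> over \<open>X\<^sub>0\<close>. The formula
  \<open>\<exists>y. \<And>x\<in>X. x \<equiv> t\<^sub>x(y)\<close>, with \<open>y\<close> a fresh copy of \<open>X\<^sub>0\<close> that is removed from the sort by a
  substitution \<open>s\<^sub>*\<close>, holds at \<open>\<nu>\<close>, hence at \<open>\<mu>\<close>: there are \<open>g\<^sub>n \<in> H\<close> with \<open>\<mu>(x) = t\<^sub>x(g)\<close>.
  Since \<open>H\<close> is free on the elements \<open>\<theta>(x\<^sub>n)\<close>, \<open>n \<in> X\<^sub>0\<close>, some endomorphism \<open>\<psi>\<close> of \<open>H\<close> sends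
  \<open>\<theta>(x\<^sub>n)\<close> to \<open>g\<^sub>n\<close>, and then \<open>\<psi> \<circ> \<nu> = \<mu>\<close>.
  Equal logical kernels thus give endomorphisms in both directions, mutually inverse on the
  images of \<open>\<nu>\<close> and \<open>\<mu>\<close>; these images are finitely generated subalgebras, so weak homogeneity
  extends the first endomorphism, restricted to the image of \<open>\<nu>\<close>, to an automorphism.\<close>

lemma wf_trm_mono: "wf_trm ar X t \<Longrightarrow> X \<subseteq> Y \<Longrightarrow> wf_trm ar Y t"
  by (induction t) auto

lemma wf_trm_subst:
  "wf_trm ar X t \<Longrightarrow> \<forall>n\<in>X. wf_trm ar Y (\<sigma> n) \<Longrightarrow> wf_trm ar Y (subst \<sigma> t)"
  by (induction t) auto

lemma subst_cong: "wf_trm ar X t \<Longrightarrow> \<forall>n\<in>X. \<sigma> n = \<sigma>' n \<Longrightarrow> subst \<sigma> t = subst \<sigma>' t"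
  by (induction t) auto

lemma subst_subst: "subst \<sigma> (subst \<tau> t) = subst (\<lambda>n. subst \<sigma> (\<tau> n)) t"
  by (induction t) auto

lemma deriv_subst:
  "deriv ar E s t \<Longrightarrow> \<forall>n. wf_trm ar UNIV (\<sigma> n) \<Longrightarrow> deriv ar E (subst \<sigma> s) (subst \<sigma> t)"
proof (induction rule: deriv.induct)
  case (ax l r \<tau>)
  have "deriv ar E (subst (\<lambda>n. subst \<sigma> (\<tau> n)) l) (subst (\<lambda>n. subst \<sigma> (\<tau> n)) r)"
    using ax by (intro deriv.ax) (auto intro: wf_trm_subst)
  then show ?case by (simp add: subst_subst)
next
  case (cong ts f ts')
  then show ?case by (auto intro!: deriv.cong simp: list_all2_conv_all_nth)
qed (auto intro: deriv.intros wf_trm_subst)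

fun eval :: "('f, 'a) alg \<Rightarrow> (nat \<Rightarrow> 'a) \<Rightarrow> 'f trm \<Rightarrow> 'a" where
  "eval H \<rho> (V n) = \<rho> n"
| "eval H \<rho> (F f ts) = op H f (map (eval H \<rho>) ts)"

lemma op_map_cong: "(\<And>x. x \<in> set xs \<Longrightarrow> f x = g x) \<Longrightarrow> op H k (map f xs) = op H k (map g xs)"
  by (metis map_cong)

lemma eval_cong: "wf_trm ar X t \<Longrightarrow> \<forall>n\<in>X. \<rho> n = \<rho>' n \<Longrightarrow> eval H \<rho> t = eval H \<rho>' t"
  by (induction t) (auto intro!: op_map_cong)

lemma eval_subst: "eval H \<rho> (subst \<sigma> t) = eval H (\<lambda>n. eval H \<rho> (\<sigma> n)) t"
  by (induction t) (auto intro!: op_map_cong)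

definition closed :: "('f \<Rightarrow> nat) \<Rightarrow> ('f, 'a) alg \<Rightarrow> bool" where
  "closed ar A \<longleftrightarrow> (\<forall>f cs. length cs = ar f \<and> set cs \<subseteq> carrier A \<longrightarrow> op A f cs \<in> carrier A)"

lemma closedD: "closed ar A \<Longrightarrow> length cs = ar f \<Longrightarrow> set cs \<subseteq> carrier A \<Longrightarrow> op A f cs \<in> carrier A"
  unfolding closed_def by blast

definition hcomp :: "('f, 'a) alg \<Rightarrow> ('a \<Rightarrow> 'b) \<Rightarrow> ('b \<Rightarrow> 'c) \<Rightarrow> 'a \<Rightarrow> 'c" where
  "hcomp A g h = (\<lambda>x. if x \<in> carrier A then h (g x) else undefined)"

definition hinv :: "('f, 'a) alg \<Rightarrow> ('f, 'b) alg \<Rightarrow> ('a \<Rightarrow> 'b) \<Rightarrow> 'b \<Rightarrow> 'a" where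
  "hinv A B h = (\<lambda>y. if y \<in> carrier B then inv_into (carrier A) h y else undefined)"

lemma hom_carrier: "\<mu> \<in> hom ar A B \<Longrightarrow> x \<in> carrier A \<Longrightarrow> \<mu> x \<in> carrier B"
  unfolding hom_def by blast

lemma hom_op:
  "\<mu> \<in> hom ar A B \<Longrightarrow> length cs = ar f \<Longrightarrow> set cs \<subseteq> carrier A \<Longrightarrow>
   \<mu> (op A f cs) = op B f (map \<mu> cs)"
  unfolding hom_def by blast

lemma hcomp_hom:
  assumes g: "g \<in> hom ar A B" and h: "h \<in> hom ar B C" and "closed ar A"
  shows "hcomp A g h \<in> hom ar A C"
proof -
  have "hcomp A g h (op A f cs) = op C f (map (hcomp A g h) cs)"
    if "length cs = ar f" "set cs \<subseteq> carrier A" for f cs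
  proof -
    have "op A f cs \<in> carrier A"
      using closedD[OF assms(3) that] .
    then have "hcomp A g h (op A f cs) = h (op B f (map g cs))"
      using hom_op[OF g] that by (simp add: hcomp_def)
    also have "\<dots> = op C f (map h (map g cs))"
      by (rule hom_op[OF h]) (use that hom_carrier[OF g] in auto)
    also have "map h (map g cs) = map (hcomp A g h) cs"
      using that by (auto simp: hcomp_def)
    finally show ?thesis .
  qed
  then show ?thesis
    using hom_carrier[OF g] hom_carrier[OF h] unfolding hom_def hcomp_def by auto
qed

lemma restrict_id_hom:
  assumes "closed ar A"
  shows "(\<lambda>x. if x \<in> carrier A then x else undefined) \<in> hom ar A A"
proof -
  have "map (\<lambda>x. if x \<in> carrier A then x else undefined) cs = cs" if "set cs \<subseteq> carrier A" for cs
    using that by (induction cs) auto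
  then show ?thesis
    using assms unfolding hom_def closed_def by auto
qed

lemma iso_hinv:
  assumes "h \<in> iso ar A B" "closed ar A"
  shows hinv_hom: "hinv A B h \<in> hom ar B A"
    and hinv_right: "\<And>y. y \<in> carrier B \<Longrightarrow> h (hinv A B h y) = y"
    and hinv_left: "\<And>x. x \<in> carrier A \<Longrightarrow> hinv A B h (h x) = x"
    and iso_closed: "closed ar B"
proof -
  have h: "h \<in> hom ar A B" and bij: "bij_betw h (carrier A) (carrier B)"
    using assms unfolding iso_def by auto
  show right: "\<And>y. y \<in> carrier B \<Longrightarrow> h (hinv A B h y) = y"
    using bij unfolding hinv_def by (simp add: bij_betw_inv_into_right)
  show "\<And>x. x \<in> carrier A \<Longrightarrow> hinv A B h (h x) = x"
    using bij unfolding hinv_def by (auto simp: bij_betw_inv_into_left bij_betwE)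
  have into: "\<And>y. y \<in> carrier B \<Longrightarrow> hinv A B h y \<in> carrier A"
    using bij unfolding hinv_def by (auto intro: inv_into_into simp: bij_betw_def)
  have op_B: "op B f cs = h (op A f (map (hinv A B h) cs))"
    and op_A: "op A f (map (hinv A B h) cs) \<in> carrier A"
    if "length cs = ar f" "set cs \<subseteq> carrier B" for f cs
  proof -
    have "h (op A f (map (hinv A B h) cs)) = op B f (map h (map (hinv A B h) cs))"
      by (rule hom_op[OF h]) (use that into in auto)
    moreover have "map h (map (hinv A B h) cs) = cs"
      using right that(2) by (induction cs) auto
    ultimately show "op B f cs = h (op A f (map (hinv A B h) cs))"
      by simp
    show "op A f (map (hinv A B h) cs) \<in> carrier A"
      by (rule closedD[OF assms(2)]) (use that into in auto)
  qed
  show "closed ar B"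
    unfolding closed_def using op_B op_A hom_carrier[OF h] by auto
  show "hinv A B h \<in> hom ar B A"
    using into op_B op_A \<open>\<And>x. x \<in> carrier A \<Longrightarrow> hinv A B h (h x) = x\<close>
    unfolding hom_def by (auto simp: hinv_def)
qed

lemma generated_subset:
  assumes "closed ar H" "S \<subseteq> carrier H"
  shows "generated ar H S \<subseteq> carrier H"
proof
  fix a assume "a \<in> generated ar H S"
  then show "a \<in> carrier H"
  proof induction
    case (opr cs f)
    then show ?case
      using closedD[OF assms(1)] by blast
  qed (use assms in auto)
qed

lemma weakly_homogeneous_automorphism:
  assumes wh: "weakly_homogeneous ar H" and "closed ar H"
    and fg_B: "fg_subalg ar H B" and fg_A: "fg_subalg ar H (\<psi>\<^sub>1 ` B)"
    and \<psi>\<^sub>1: "\<psi>\<^sub>1 \<in> hom ar H H" and \<psi>\<^sub>2: "\<psi>\<^sub>2 \<in> hom ar H H"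
    and inverse: "\<forall>b\<in>B. \<psi>\<^sub>2 (\<psi>\<^sub>1 b) = b"
  shows "\<exists>\<psi>. automorphism ar H \<psi> \<and> (\<forall>b\<in>B. \<psi> b = \<psi>\<^sub>1 b)"
proof -
  define A where "A = \<psi>\<^sub>1 ` B"
  define \<phi> where "\<phi> b = (if b \<in> B then \<psi>\<^sub>1 b else undefined)" for b
  obtain S where S: "S \<subseteq> carrier H" "B = generated ar H S"
    using fg_B unfolding fg_subalg_def by blast
  have B_carrier: "B \<subseteq> carrier H"
    using generated_subset[OF \<open>closed ar H\<close> S(1)] S(2) by simp
  have inj: "inj_on \<phi> B"
    using inverse by (metis \<phi>_def inj_onI)
  have img: "\<phi> ` B = A"
    unfolding A_def \<phi>_def by simp
  have "\<phi> (op H f cs) = op H f (map \<phi> cs)" if "length cs = ar f" "set cs \<subseteq> B" for f cs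
  proof -
    have "op H f cs \<in> B"
      unfolding S(2) by (rule generated.opr) (use that S(2) in auto)
    then have "\<phi> (op H f cs) = op H f (map \<psi>\<^sub>1 cs)"
      using hom_op[OF \<psi>\<^sub>1] that B_carrier by (auto simp: \<phi>_def)
    then show ?thesis
      using that by (auto simp: \<phi>_def intro!: op_map_cong)
  qed
  then have "\<phi> \<in> iso ar (subalg H B) (subalg H A)"
    using inj img unfolding iso_def hom_def subalg_def bij_betw_def by (auto simp: \<phi>_def)
  moreover have "\<exists>\<psi> \<in> hom ar H H. \<forall>b \<in> B. \<psi> b = \<phi> b"
    using \<psi>\<^sub>1 by (auto simp: \<phi>_def)
  moreover have "\<exists>\<psi> \<in> hom ar H H. \<forall>a \<in> A. \<psi> a = inv_into B \<phi> a"
    using \<psi>\<^sub>2 inverse inv_into_f_f[OF inj] unfolding A_def \<phi>_def by auto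
  ultimately obtain \<psi> where "automorphism ar H \<psi>" "\<forall>b\<in>B. \<psi> b = \<phi> b"
    using wh[unfolded weakly_homogeneous_def, rule_format, of B A \<phi>] fg_B fg_A
    unfolding A_def by blast
  then show ?thesis
    by (auto simp: \<phi>_def)
qed

locale equational_theory =
  fixes ar :: "'f \<Rightarrow> nat" and E :: "('f trm \<times> 'f trm) set"
begin

abbreviation gen :: "nat set \<Rightarrow> nat \<Rightarrow> 'f trm set" where
  "gen X x \<equiv> cls ar E X (V x)"

lemma cls_self: "wf_trm ar X t \<Longrightarrow> t \<in> cls ar E X t"
  unfolding cls_def using deriv.refl wf_trm_mono[of ar X t UNIV] by simp

lemma cls_eqI: "deriv ar E s t \<Longrightarrow> cls ar E X s = cls ar E X t"
  unfolding cls_def by (auto intro: deriv.trans deriv.sym)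

lemma cls_memD: "u \<in> cls ar E X t \<Longrightarrow> wf_trm ar X u \<and> deriv ar E u t"
  unfolding cls_def using deriv.sym by blast

lemma some_cls:
  "wf_trm ar X t \<Longrightarrow> wf_trm ar X (SOME u. u \<in> cls ar E X t) \<and> deriv ar E (SOME u. u \<in> cls ar E X t) t"
  by (rule cls_memD, rule someI, rule cls_self)

lemma carrier_W_iff: "c \<in> carrier (W ar E X) \<longleftrightarrow> (\<exists>t. wf_trm ar X t \<and> c = cls ar E X t)"
  unfolding W_def by auto

lemma cls_carrier: "wf_trm ar X t \<Longrightarrow> cls ar E X t \<in> carrier (W ar E X)"
  unfolding carrier_W_iff by blast

lemma carrier_W_list:
  assumes "set cs \<subseteq> carrier (W ar E X)"
  obtains ts where "\<forall>t\<in>set ts. wf_trm ar X t" "cs = map (cls ar E X) ts"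
proof -
  have "set cs \<subseteq> cls ar E X ` {t. wf_trm ar X t}"
    using assms unfolding W_def by auto
  then have "cs \<in> lists (cls ar E X ` {t. wf_trm ar X t})"
    by auto
  then show ?thesis
    unfolding lists_image using that by auto
qed

lemma op_W:
  "length cs = ar f \<Longrightarrow> set cs \<subseteq> carrier (W ar E X) \<Longrightarrow>
   op (W ar E X) f cs = cls ar E X (F f (map (\<lambda>c. SOME t. t \<in> c) cs))"
  unfolding W_def by simp

lemma op_W_cls:
  assumes "length ts = ar f" "\<forall>t\<in>set ts. wf_trm ar X t"
  shows "op (W ar E X) f (map (cls ar E X) ts) = cls ar E X (F f ts)"
proof -
  let ?r = "\<lambda>t. SOME u. u \<in> cls ar E X t"
  have r: "wf_trm ar X (?r t) \<and> deriv ar E (?r t) t" if "t \<in> set ts" for t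
    using some_cls assms(2) that by blast
  have "set (map (cls ar E X) ts) \<subseteq> carrier (W ar E X)"
    using assms(2) cls_carrier by auto
  then have "op (W ar E X) f (map (cls ar E X) ts) = cls ar E X (F f (map ?r ts))"
    using op_W[of "map (cls ar E X) ts" f X] assms(1) by (simp add: comp_def)
  also have "\<dots> = cls ar E X (F f ts)"
    using assms(1) r by (intro cls_eqI deriv.cong) (auto simp: list_all2_conv_all_nth)
  finally show ?thesis .
qed

lemma W_closed: "closed ar (W ar E X)"
  unfolding closed_def
proof (intro allI impI)
  fix f cs assume cs: "length cs = ar f \<and> set cs \<subseteq> carrier (W ar E X)"
  then obtain ts where "\<forall>t\<in>set ts. wf_trm ar X t" "cs = map (cls ar E X) ts"
    using carrier_W_list by blast
  then show "op (W ar E X) f cs \<in> carrier (W ar E X)"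
    using cs op_W_cls cls_carrier by auto
qed

lemma gen_carrier: "x \<in> X \<Longrightarrow> gen X x \<in> carrier (W ar E X)"
  by (simp add: cls_carrier)

lemma hom_W_F:
  assumes "\<mu> \<in> hom ar (W ar E X) H" "length ts = ar f" "\<forall>t\<in>set ts. wf_trm ar X t"
  shows "\<mu> (cls ar E X (F f ts)) = op H f (map (\<lambda>t. \<mu> (cls ar E X t)) ts)"
proof -
  have "set (map (cls ar E X) ts) \<subseteq> carrier (W ar E X)"
    using assms(3) cls_carrier by auto
  then show ?thesis
    using hom_op[OF assms(1), of "map (cls ar E X) ts" f] op_W_cls[OF assms(2,3)] assms(2)
    by (simp add: comp_def)
qed

lemma hom_W_eval:
  assumes "\<mu> \<in> hom ar (W ar E X) H"
  shows "wf_trm ar X t \<Longrightarrow> \<mu> (cls ar E X t) = eval H (\<lambda>n. \<mu> (gen X n)) t"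
  by (induction t) (auto simp: hom_W_F[OF assms] intro!: op_map_cong)

lemma hom_W_eqI:
  assumes "\<mu> \<in> hom ar (W ar E X) H" "\<mu>' \<in> hom ar (W ar E X) H"
    "\<forall>x\<in>X. \<mu> (gen X x) = \<mu>' (gen X x)" "c \<in> carrier (W ar E X)"
  shows "\<mu> c = \<mu>' c"
proof -
  obtain t where t: "wf_trm ar X t" "c = cls ar E X t"
    using assms(4) unfolding carrier_W_iff by blast
  then have "\<mu> c = eval H (\<lambda>n. \<mu> (gen X n)) t"
    using hom_W_eval[OF assms(1)] by simp
  also have "\<dots> = eval H (\<lambda>n. \<mu>' (gen X n)) t"
    by (rule eval_cong[OF t(1)]) (use assms(3) in simp)
  also have "\<dots> = \<mu>' c"
    using t hom_W_eval[OF assms(2)] by simp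
  finally show ?thesis .
qed

lemma hom_W_ext:
  assumes "\<mu> \<in> hom ar (W ar E X) H" "\<mu>' \<in> hom ar (W ar E X) H"
    "\<forall>x\<in>X. \<mu> (gen X x) = \<mu>' (gen X x)"
  shows "\<mu> = \<mu>'"
proof
  fix c show "\<mu> c = \<mu>' c"
    using hom_W_eqI[OF assms] assms(1,2) unfolding hom_def by (cases "c \<in> carrier (W ar E X)") auto
qed

text \<open>Outside \<open>X\<close> the substitution is the identity, so that it maps every variable to a
  well-formed term, as \<open>deriv_subst\<close> requires.\<close>
definition subst_hom :: "nat set \<Rightarrow> nat set \<Rightarrow> (nat \<Rightarrow> 'f trm) \<Rightarrow> 'f trm set \<Rightarrow> 'f trm set" where
  "subst_hom X Y \<sigma> c = (if c \<in> carrier (W ar E X)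
     then cls ar E Y (subst (\<lambda>n. if n \<in> X then \<sigma> n else V n) (SOME t. t \<in> c)) else undefined)"

lemma subst_hom_cls:
  assumes "wf_trm ar X t" "\<forall>x\<in>X. wf_trm ar Y (\<sigma> x)"
  shows "subst_hom X Y \<sigma> (cls ar E X t) = cls ar E Y (subst \<sigma> t)"
proof -
  let ?\<sigma> = "\<lambda>n. if n \<in> X then \<sigma> n else V n"
  let ?t = "SOME u. u \<in> cls ar E X t"
  have "deriv ar E ?t t"
    using some_cls[OF assms(1)] ..
  then have "deriv ar E (subst ?\<sigma> ?t) (subst ?\<sigma> t)"
    using assms(2) wf_trm_mono[of ar Y _ UNIV] by (intro deriv_subst) auto
  moreover have "subst ?\<sigma> t = subst \<sigma> t"
    using subst_cong[OF assms(1)] by auto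
  ultimately have "cls ar E Y (subst ?\<sigma> ?t) = cls ar E Y (subst \<sigma> t)"
    by (metis cls_eqI)
  then show ?thesis
    unfolding subst_hom_def using cls_carrier[OF assms(1)] by simp
qed

lemma subst_hom_hom:
  assumes \<sigma>: "\<forall>x\<in>X. wf_trm ar Y (\<sigma> x)"
  shows "subst_hom X Y \<sigma> \<in> hom ar (W ar E X) (W ar E Y)"
proof -
  have "subst_hom X Y \<sigma> c \<in> carrier (W ar E Y)" if c: "c \<in> carrier (W ar E X)" for c
  proof -
    obtain t where t: "wf_trm ar X t" "c = cls ar E X t"
      using c unfolding carrier_W_iff by blast
    then show ?thesis
      using subst_hom_cls[OF t(1) \<sigma>] cls_carrier[OF wf_trm_subst[OF t(1) \<sigma>]] by simp
  qed
  moreover have "subst_hom X Y \<sigma> (op (W ar E X) f cs) = op (W ar E Y) f (map (subst_hom X Y \<sigma>) cs)"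
    if "length cs = ar f" and cs: "set cs \<subseteq> carrier (W ar E X)" for f cs
  proof -
    obtain ts where ts: "\<forall>t\<in>set ts. wf_trm ar X t" "cs = map (cls ar E X) ts"
      using carrier_W_list[OF cs] by blast
    have len: "length ts = ar f"
      using that(1) ts(2) by simp
    have wf: "\<forall>t\<in>set (map (subst \<sigma>) ts). wf_trm ar Y t"
      using ts(1) wf_trm_subst[OF _ \<sigma>] by auto
    have "subst_hom X Y \<sigma> (op (W ar E X) f cs) = cls ar E Y (subst \<sigma> (F f ts))"
      using op_W_cls[OF len ts(1)] subst_hom_cls[of X "F f ts", OF _ \<sigma>] len ts by simp
    also have "\<dots> = op (W ar E Y) f (map (cls ar E Y) (map (subst \<sigma>) ts))"
      using op_W_cls[of "map (subst \<sigma>) ts" f Y] len wf by simp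
    also have "map (cls ar E Y) (map (subst \<sigma>) ts) = map (subst_hom X Y \<sigma>) cs"
      using ts subst_hom_cls[OF _ \<sigma>] by simp
    finally show ?thesis .
  qed
  moreover have "subst_hom X Y \<sigma> c = undefined" if "c \<notin> carrier (W ar E X)" for c
    using that by (simp add: subst_hom_def)
  ultimately show ?thesis
    unfolding hom_def by blast
qed

lemma hom_W_image:
  assumes \<mu>: "\<mu> \<in> hom ar (W ar E X) H"
  shows "\<mu> ` carrier (W ar E X) = generated ar H ((\<lambda>x. \<mu> (gen X x)) ` X)"
proof
  have "\<mu> (cls ar E X t) \<in> generated ar H ((\<lambda>x. \<mu> (gen X x)) ` X)" if "wf_trm ar X t" for t
    using that
  proof (induction t)
    case (F f ts)
    then show ?case by (auto simp: hom_W_F[OF \<mu>] intro!: generated.opr)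
  qed (auto intro: generated.base)
  then show "\<mu> ` carrier (W ar E X) \<subseteq> generated ar H ((\<lambda>x. \<mu> (gen X x)) ` X)"
    by (auto simp: carrier_W_iff)
next
  show "generated ar H ((\<lambda>x. \<mu> (gen X x)) ` X) \<subseteq> \<mu> ` carrier (W ar E X)"
  proof
    fix a assume "a \<in> generated ar H ((\<lambda>x. \<mu> (gen X x)) ` X)"
    then show "a \<in> \<mu> ` carrier (W ar E X)"
    proof induction
      case (opr cs f)
      then have "cs \<in> lists (\<mu> ` carrier (W ar E X))" by auto
      then obtain ds where ds: "set ds \<subseteq> carrier (W ar E X)" "cs = map \<mu> ds"
        unfolding lists_image by auto
      have "op (W ar E X) f ds \<in> carrier (W ar E X)"
        using closedD[OF W_closed] ds opr(1) by simp
      moreover have "\<mu> (op (W ar E X) f ds) = op H f cs"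
        using hom_op[OF \<mu>] ds opr(1) by simp
      ultimately show ?case
        by (metis image_eqI)
    qed (auto simp: gen_carrier)
  qed
qed

lemma fg_subalg_hom_image:
  assumes "finite X" "\<mu> \<in> hom ar (W ar E X) H"
  shows "fg_subalg ar H (\<mu> ` carrier (W ar E X))"
  unfolding fg_subalg_def hom_W_image[OF assms(2)]
  by (intro exI[of _ "(\<lambda>x. \<mu> (gen X x)) ` X"]) (use assms hom_carrier[OF assms(2) gen_carrier] in auto)

lemma val_hom: "\<kappa> \<in> val ar E H Z u \<Longrightarrow> \<kappa> \<in> hom ar (W ar E Z) H"
  by (induction u arbitrary: Z) auto

lemma finite_Conj_formula:
  assumes "finite U" "U \<noteq> {}" "\<forall>u\<in>U. phi ar E Z u"
  shows "\<exists>c. phi ar E Z c \<and> (\<forall>\<kappa>. \<kappa> \<in> val ar E H Z c \<longleftrightarrow> (\<forall>u\<in>U. \<kappa> \<in> val ar E H Z u))"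
  using assms
proof (induction U rule: finite_ne_induct)
  case (insert u U)
  then obtain c where "phi ar E Z c" "\<forall>\<kappa>. \<kappa> \<in> val ar E H Z c \<longleftrightarrow> (\<forall>u\<in>U. \<kappa> \<in> val ar E H Z u)"
    by auto
  then show ?case
    using insert.prems by (intro exI[of _ "Conj u c"]) (auto intro: phi.conj)
qed auto

lemma Eq_conj_formula:
  assumes "finite Z" "X \<subseteq> Z" "X \<noteq> {}" "\<forall>x\<in>X. wf_trm ar Z (s x)"
  shows "\<exists>c. phi ar E Z c \<and> (\<forall>\<kappa>. \<kappa> \<in> val ar E H Z c \<longleftrightarrow> \<kappa> \<in> hom ar (W ar E Z) H \<and>
           (\<forall>x\<in>X. \<kappa> (gen Z x) = \<kappa> (cls ar E Z (s x))))"
proof -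
  let ?U = "(\<lambda>x. Eq (gen Z x) (cls ar E Z (s x))) ` X"
  have "finite ?U"
    using finite_subset[OF assms(2,1)] by simp
  moreover have "\<forall>u\<in>?U. phi ar E Z u"
    using assms cls_carrier by (auto intro!: phi.eq)
  ultimately obtain c where "phi ar E Z c" "\<forall>\<kappa>. \<kappa> \<in> val ar E H Z c \<longleftrightarrow> (\<forall>u\<in>?U. \<kappa> \<in> val ar E H Z u)"
    using finite_Conj_formula[of ?U Z H] assms(3) by blast
  then show ?thesis
    using assms(3) by (intro exI[of _ c]) auto
qed
end

locale free_algebra_iso = equational_theory ar E
  for ar :: "'f \<Rightarrow> nat" and E :: "('f trm \<times> 'f trm) set" +
  fixes H :: "('f, 'a) alg" and X\<^sub>0 :: "nat set" and \<theta> :: "'f trm set \<Rightarrow> 'a"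
  assumes finite_X\<^sub>0: "finite X\<^sub>0" and \<theta>_iso: "\<theta> \<in> iso ar (W ar E X\<^sub>0) H"
begin

abbreviation \<theta>' :: "'a \<Rightarrow> 'f trm set" where
  "\<theta>' \<equiv> hinv (W ar E X\<^sub>0) H \<theta>"

lemma \<theta>_hom: "\<theta> \<in> hom ar (W ar E X\<^sub>0) H"
  using \<theta>_iso unfolding iso_def by blast

lemmas \<theta>'_hom = hinv_hom[OF \<theta>_iso W_closed]
  and \<theta>_\<theta>' = hinv_right[OF \<theta>_iso W_closed]
  and \<theta>'_\<theta> = hinv_left[OF \<theta>_iso W_closed]
  and closed_H = iso_closed[OF \<theta>_iso W_closed]

lemma carrier_H_term:
  assumes "y \<in> carrier H"
  shows "\<exists>t. wf_trm ar X\<^sub>0 t \<and> \<theta> (cls ar E X\<^sub>0 t) = y"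
proof -
  obtain t where t: "wf_trm ar X\<^sub>0 t" "\<theta>' y = cls ar E X\<^sub>0 t"
    using hom_carrier[OF \<theta>'_hom assms] unfolding carrier_W_iff by blast
  then show ?thesis
    using \<theta>_\<theta>'[OF assms] by metis
qed

lemma hom_W_exists:
  assumes "\<forall>x\<in>X. \<rho> x \<in> carrier H"
  obtains \<mu> where "\<mu> \<in> hom ar (W ar E X) H" "\<forall>x\<in>X. \<mu> (gen X x) = \<rho> x"
proof -
  have "\<forall>x\<in>X. \<exists>t. wf_trm ar X\<^sub>0 t \<and> \<theta> (cls ar E X\<^sub>0 t) = \<rho> x"
    using assms carrier_H_term by blast
  then obtain t where t: "\<forall>x\<in>X. wf_trm ar X\<^sub>0 (t x) \<and> \<theta> (cls ar E X\<^sub>0 (t x)) = \<rho> x"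
    by (rule bchoice[THEN exE])
  define \<mu> where "\<mu> = hcomp (W ar E X) (subst_hom X X\<^sub>0 t) \<theta>"
  have "\<mu> \<in> hom ar (W ar E X) H"
    unfolding \<mu>_def by (rule hcomp_hom[OF subst_hom_hom \<theta>_hom W_closed]) (use t in auto)
  moreover have "\<mu> (gen X x) = \<rho> x" if "x \<in> X" for x
  proof -
    have "\<mu> (gen X x) = \<theta> (subst_hom X X\<^sub>0 t (gen X x))"
      unfolding \<mu>_def hcomp_def using gen_carrier[OF that] by simp
    also have "subst_hom X X\<^sub>0 t (gen X x) = cls ar E X\<^sub>0 (t x)"
      using subst_hom_cls[of X "V x" X\<^sub>0 t] that t by simp
    finally show ?thesis
      using that t by simp
  qed
  ultimately show ?thesis
    using that by blast
qed

lemma endo_from_assignment: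
  assumes "\<forall>n\<in>X\<^sub>0. g n \<in> carrier H"
  obtains \<psi> where "\<psi> \<in> hom ar H H"
    "\<And>t. wf_trm ar X\<^sub>0 t \<Longrightarrow> \<psi> (\<theta> (cls ar E X\<^sub>0 t)) = eval H g t"
proof -
  obtain \<psi>\<^sub>0 where \<psi>\<^sub>0: "\<psi>\<^sub>0 \<in> hom ar (W ar E X\<^sub>0) H" "\<forall>n\<in>X\<^sub>0. \<psi>\<^sub>0 (gen X\<^sub>0 n) = g n"
    using hom_W_exists[OF assms] by blast
  have "hcomp H \<theta>' \<psi>\<^sub>0 \<in> hom ar H H"
    by (rule hcomp_hom[OF \<theta>'_hom \<psi>\<^sub>0(1) closed_H])
  moreover have "hcomp H \<theta>' \<psi>\<^sub>0 (\<theta> (cls ar E X\<^sub>0 t)) = eval H g t" if t: "wf_trm ar X\<^sub>0 t" for t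
  proof -
    have "hcomp H \<theta>' \<psi>\<^sub>0 (\<theta> (cls ar E X\<^sub>0 t)) = \<psi>\<^sub>0 (cls ar E X\<^sub>0 t)"
      using hom_carrier[OF \<theta>_hom cls_carrier[OF t]] \<theta>'_\<theta>[OF cls_carrier[OF t]]
      by (simp add: hcomp_def)
    also have "\<dots> = eval H (\<lambda>n. \<psi>\<^sub>0 (gen X\<^sub>0 n)) t"
      by (rule hom_W_eval[OF \<psi>\<^sub>0(1) t])
    also have "\<dots> = eval H g t"
      by (rule eval_cong[OF t]) (use \<psi>\<^sub>0(2) in simp)
    finally show ?thesis .
  qed
  ultimately show ?thesis
    using that by blast
qed

lemma val_Exi_insert:
  assumes e: "\<And>\<kappa>. \<kappa> \<in> val ar E H Z e \<longleftrightarrow> \<kappa> \<in> hom ar (W ar E Z) H \<and>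
      (\<exists>\<kappa>' \<in> val ar E H Z u. \<forall>z\<in>Z - Y. \<kappa>' (gen Z z) = \<kappa> (gen Z z))"
  shows "\<kappa> \<in> val ar E H Z (Exi y e) \<longleftrightarrow> \<kappa> \<in> hom ar (W ar E Z) H \<and>
      (\<exists>\<kappa>' \<in> val ar E H Z u. \<forall>z\<in>Z - insert y Y. \<kappa>' (gen Z z) = \<kappa> (gen Z z))"
proof
  assume "\<kappa> \<in> val ar E H Z (Exi y e)"
  then obtain \<nu> where \<kappa>: "\<kappa> \<in> hom ar (W ar E Z) H"
    and \<nu>: "\<forall>z\<in>Z - {y}. \<nu> (gen Z z) = \<kappa> (gen Z z)" "\<nu> \<in> val ar E H Z e"
    by auto
  then obtain \<kappa>' where \<kappa>': "\<kappa>' \<in> val ar E H Z u" "\<forall>z\<in>Z - Y. \<kappa>' (gen Z z) = \<nu> (gen Z z)"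
    using e by blast
  then have "\<forall>z\<in>Z - insert y Y. \<kappa>' (gen Z z) = \<kappa> (gen Z z)"
    using \<nu>(1) by auto
  then show "\<kappa> \<in> hom ar (W ar E Z) H \<and>
    (\<exists>\<kappa>' \<in> val ar E H Z u. \<forall>z\<in>Z - insert y Y. \<kappa>' (gen Z z) = \<kappa> (gen Z z))"
    using \<kappa> \<kappa>'(1) by blast
next
  assume "\<kappa> \<in> hom ar (W ar E Z) H \<and>
    (\<exists>\<kappa>' \<in> val ar E H Z u. \<forall>z\<in>Z - insert y Y. \<kappa>' (gen Z z) = \<kappa> (gen Z z))"
  then obtain \<kappa>' where \<kappa>: "\<kappa> \<in> hom ar (W ar E Z) H" and \<kappa>': "\<kappa>' \<in> val ar E H Z u"
    "\<forall>z\<in>Z - insert y Y. \<kappa>' (gen Z z) = \<kappa> (gen Z z)"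
    by blast
  define \<rho> where "\<rho> z = (if z = y then \<kappa>' (gen Z z) else \<kappa> (gen Z z))" for z
  have "\<forall>z\<in>Z. \<rho> z \<in> carrier H"
    unfolding \<rho>_def using hom_carrier[OF val_hom[OF \<kappa>'(1)]] hom_carrier[OF \<kappa>] gen_carrier by auto
  then obtain \<nu> where \<nu>: "\<nu> \<in> hom ar (W ar E Z) H" "\<forall>z\<in>Z. \<nu> (gen Z z) = \<rho> z"
    using hom_W_exists by blast
  have "\<nu> \<in> val ar E H Z e"
    using e \<nu> \<kappa>' by (auto simp: \<rho>_def)
  moreover have "\<forall>z\<in>Z - {y}. \<nu> (gen Z z) = \<kappa> (gen Z z)"
    using \<nu>(2) by (simp add: \<rho>_def)
  ultimately show "\<kappa> \<in> val ar E H Z (Exi y e)"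
    using \<kappa> \<nu>(1) by (auto intro!: bexI[of _ \<nu>])
qed

lemma finite_Exi_formula:
  assumes "finite Y" "Y \<subseteq> Z" "phi ar E Z u"
  shows "\<exists>e. phi ar E Z e \<and> (\<forall>\<kappa>. \<kappa> \<in> val ar E H Z e \<longleftrightarrow> \<kappa> \<in> hom ar (W ar E Z) H \<and>
           (\<exists>\<kappa>' \<in> val ar E H Z u. \<forall>z\<in>Z - Y. \<kappa>' (gen Z z) = \<kappa> (gen Z z)))"
  using assms
proof (induction Y rule: finite_induct)
  case empty
  have "\<kappa> \<in> val ar E H Z u \<longleftrightarrow> \<kappa> \<in> hom ar (W ar E Z) H \<and>
      (\<exists>\<kappa>' \<in> val ar E H Z u. \<forall>z\<in>Z - {}. \<kappa>' (gen Z z) = \<kappa> (gen Z z))" for \<kappa>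
  proof
    assume "\<kappa> \<in> hom ar (W ar E Z) H \<and>
      (\<exists>\<kappa>' \<in> val ar E H Z u. \<forall>z\<in>Z - {}. \<kappa>' (gen Z z) = \<kappa> (gen Z z))"
    then obtain \<kappa>' where "\<kappa>' \<in> val ar E H Z u" "\<kappa>' = \<kappa>"
      using hom_W_ext[OF val_hom] by force
    then show "\<kappa> \<in> val ar E H Z u"
      by simp
  qed (use val_hom in auto)
  then show ?case
    using empty by blast
next
  case (insert y Y)
  then obtain e where e: "phi ar E Z e" "\<And>\<kappa>. \<kappa> \<in> val ar E H Z e \<longleftrightarrow> \<kappa> \<in> hom ar (W ar E Z) H \<and>
      (\<exists>\<kappa>' \<in> val ar E H Z u. \<forall>z\<in>Z - Y. \<kappa>' (gen Z z) = \<kappa> (gen Z z))"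
    by auto
  have "\<kappa> \<in> val ar E H Z (Exi y e) \<longleftrightarrow> \<kappa> \<in> hom ar (W ar E Z) H \<and>
      (\<exists>\<kappa>' \<in> val ar E H Z u. \<forall>z\<in>Z - insert y Y. \<kappa>' (gen Z z) = \<kappa> (gen Z z))" for \<kappa>
    by (rule val_Exi_insert[OF e(2)])
  then show ?case
    using e(1) insert.prems by (intro exI[of _ "Exi y e"]) (auto intro: phi.exi)
qed

lemma projection_formula:
  assumes "finite Z" "X \<subseteq> Z" "X \<noteq> {}" "phi ar E Z u"
  shows "\<exists>v. phi ar E X v \<and> (\<forall>\<mu>. \<mu> \<in> val ar E H X v \<longleftrightarrow> \<mu> \<in> hom ar (W ar E X) H \<and>
           (\<exists>\<kappa> \<in> val ar E H Z u. \<forall>x\<in>X. \<kappa> (gen Z x) = \<mu> (gen X x)))"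
proof -
  obtain x\<^sub>0 where "x\<^sub>0 \<in> X"
    using assms(3) by blast
  obtain e where e: "phi ar E Z e" "\<And>\<kappa>. \<kappa> \<in> val ar E H Z e \<longleftrightarrow> \<kappa> \<in> hom ar (W ar E Z) H \<and>
      (\<exists>\<kappa>' \<in> val ar E H Z u. \<forall>z\<in>Z - (Z - X). \<kappa>' (gen Z z) = \<kappa> (gen Z z))"
    using finite_Exi_formula[of "Z - X" Z u] assms by auto
  \<comment> \<open>a retraction \<open>W(Z) \<rightarrow> W(X)\<close>; its values on \<open>Z - X\<close> are irrelevant, as these are bound in \<open>e\<close>\<close>
  define s where "s = subst_hom Z X (\<lambda>z. if z \<in> X then V z else V x\<^sub>0)"
  have s: "s \<in> hom ar (W ar E Z) (W ar E X)"
    unfolding s_def using \<open>x\<^sub>0 \<in> X\<close> by (intro subst_hom_hom) auto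
  have "hcomp (W ar E Z) s \<mu> (gen Z x) = \<mu> (gen X x)" if "x \<in> X" for x and \<mu> :: "'f trm set \<Rightarrow> 'a"
    using that assms(2) subst_hom_cls[of Z "V x" X] \<open>x\<^sub>0 \<in> X\<close> gen_carrier[of x Z]
    unfolding s_def hcomp_def by auto
  moreover have "Z - (Z - X) = X"
    using assms(2) by blast
  ultimately have "\<mu> \<in> val ar E H X (Sub Z s e) \<longleftrightarrow> \<mu> \<in> hom ar (W ar E X) H \<and>
      (\<exists>\<kappa> \<in> val ar E H Z u. \<forall>x\<in>X. \<kappa> (gen Z x) = \<mu> (gen X x))" for \<mu>
    using e(2) hcomp_hom[OF s _ W_closed] by (auto simp: hcomp_def[symmetric])
  moreover have "phi ar E X (Sub Z s e)"
    using assms(1,2) by (intro phi.sub s e(1)) (rule finite_subset)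
  ultimately show ?thesis
    by blast
qed

lemma shifted_equations_formula:
  assumes "finite X" "X \<noteq> {}" "\<forall>x\<in>X. wf_trm ar X\<^sub>0 (t x)" "\<forall>n. n + N \<notin> X"
  defines "Z \<equiv> X \<union> (\<lambda>n. n + N) ` X\<^sub>0"
  shows "\<exists>c. phi ar E Z c \<and> (\<forall>\<kappa>. \<kappa> \<in> val ar E H Z c \<longleftrightarrow> \<kappa> \<in> hom ar (W ar E Z) H \<and>
           (\<forall>x\<in>X. \<kappa> (gen Z x) = eval H (\<lambda>n. \<kappa> (gen Z (n + N))) (t x)))"
proof -
  define r :: "nat \<Rightarrow> 'f trm" where "r n = V (n + N)" for n
  have wf_r: "wf_trm ar Z (subst r (t x))" if "x \<in> X" for x
    using assms(3) that by (auto intro!: wf_trm_subst simp: r_def Z_def)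
  have eval_r: "\<kappa> (cls ar E Z (subst r (t x))) = eval H (\<lambda>n. \<kappa> (gen Z (n + N))) (t x)"
    if "\<kappa> \<in> hom ar (W ar E Z) H" "x \<in> X" for \<kappa> x
    using hom_W_eval[OF that(1) wf_r[OF that(2)]] by (simp add: eval_subst r_def)
  have "finite Z" "X \<subseteq> Z"
    unfolding Z_def using assms(1) finite_X\<^sub>0 by auto
  then obtain c where c: "phi ar E Z c" "\<And>\<kappa>. \<kappa> \<in> val ar E H Z c \<longleftrightarrow> \<kappa> \<in> hom ar (W ar E Z) H \<and>
      (\<forall>x\<in>X. \<kappa> (gen Z x) = \<kappa> (cls ar E Z (subst r (t x))))"
    using Eq_conj_formula[of Z X "\<lambda>x. subst r (t x)" H] assms(2) wf_r by blast
  then show ?thesis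
    using eval_r by (intro exI[of _ c]) auto
qed

lemma term_image_formula:
  assumes "finite X" "X \<noteq> {}" "\<forall>x\<in>X. wf_trm ar X\<^sub>0 (t x)"
  shows "\<exists>v. phi ar E X v \<and> (\<forall>\<mu>. \<mu> \<in> val ar E H X v \<longleftrightarrow> \<mu> \<in> hom ar (W ar E X) H \<and>
           (\<exists>g. (\<forall>n\<in>X\<^sub>0. g n \<in> carrier H) \<and> (\<forall>x\<in>X. \<mu> (gen X x) = eval H g (t x))))"
proof -
  define N where "N = Suc (Max X)"
  have fresh: "\<forall>n. n + N \<notin> X"
    using Max_ge[OF assms(1)] unfolding N_def by fastforce
  define Z where "Z = X \<union> (\<lambda>n. n + N) ` X\<^sub>0"
  have Z: "finite Z" "X \<subseteq> Z" "\<And>n. n \<in> X\<^sub>0 \<Longrightarrow> n + N \<in> Z"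
    unfolding Z_def using assms(1) finite_X\<^sub>0 by auto
  obtain c where c: "phi ar E Z c" "\<And>\<kappa>. \<kappa> \<in> val ar E H Z c \<longleftrightarrow> \<kappa> \<in> hom ar (W ar E Z) H \<and>
      (\<forall>x\<in>X. \<kappa> (gen Z x) = eval H (\<lambda>n. \<kappa> (gen Z (n + N))) (t x))"
    using shifted_equations_formula[OF assms fresh] unfolding Z_def by blast
  obtain v where v: "phi ar E X v" "\<And>\<mu>. \<mu> \<in> val ar E H X v \<longleftrightarrow> \<mu> \<in> hom ar (W ar E X) H \<and>
      (\<exists>\<kappa> \<in> val ar E H Z c. \<forall>x\<in>X. \<kappa> (gen Z x) = \<mu> (gen X x))"
    using projection_formula[OF Z(1,2) assms(2) c(1)] by blast
  have "(\<exists>\<kappa> \<in> val ar E H Z c. \<forall>x\<in>X. \<kappa> (gen Z x) = \<mu> (gen X x)) \<longleftrightarrow>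
      (\<exists>g. (\<forall>n\<in>X\<^sub>0. g n \<in> carrier H) \<and> (\<forall>x\<in>X. \<mu> (gen X x) = eval H g (t x)))"
    if \<mu>: "\<mu> \<in> hom ar (W ar E X) H" for \<mu>
  proof
    assume "\<exists>\<kappa> \<in> val ar E H Z c. \<forall>x\<in>X. \<kappa> (gen Z x) = \<mu> (gen X x)"
    then obtain \<kappa> where \<kappa>: "\<kappa> \<in> val ar E H Z c" "\<forall>x\<in>X. \<kappa> (gen Z x) = \<mu> (gen X x)"
      by blast
    then show "\<exists>g. (\<forall>n\<in>X\<^sub>0. g n \<in> carrier H) \<and> (\<forall>x\<in>X. \<mu> (gen X x) = eval H g (t x))"
      using c(2) hom_carrier[OF val_hom[OF \<kappa>(1)] gen_carrier[OF Z(3)]]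
      by (intro exI[of _ "\<lambda>n. \<kappa> (gen Z (n + N))"]) auto
  next
    assume "\<exists>g. (\<forall>n\<in>X\<^sub>0. g n \<in> carrier H) \<and> (\<forall>x\<in>X. \<mu> (gen X x) = eval H g (t x))"
    then obtain g where g: "\<forall>n\<in>X\<^sub>0. g n \<in> carrier H" "\<forall>x\<in>X. \<mu> (gen X x) = eval H g (t x)"
      by blast
    define \<rho> where "\<rho> z = (if z \<in> X then \<mu> (gen X z) else g (z - N))" for z
    have "\<forall>z\<in>Z. \<rho> z \<in> carrier H"
      using g(1) hom_carrier[OF \<mu> gen_carrier] unfolding Z_def \<rho>_def by auto
    then obtain \<kappa> where \<kappa>: "\<kappa> \<in> hom ar (W ar E Z) H" "\<forall>z\<in>Z. \<kappa> (gen Z z) = \<rho> z"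
      using hom_W_exists by blast
    have "eval H g (t x) = eval H (\<lambda>n. \<kappa> (gen Z (n + N))) (t x)" if "x \<in> X" for x
      using assms(3) that \<kappa>(2) Z(3) fresh by (intro eval_cong) (auto simp: \<rho>_def)
    moreover have agree: "\<forall>x\<in>X. \<kappa> (gen Z x) = \<mu> (gen X x)"
      using \<kappa>(2) Z(2) by (auto simp: \<rho>_def)
    ultimately have "\<kappa> \<in> val ar E H Z c"
      using c(2) \<kappa>(1) g(2) by auto
    then show "\<exists>\<kappa> \<in> val ar E H Z c. \<forall>x\<in>X. \<kappa> (gen Z x) = \<mu> (gen X x)"
      using agree by blast
  qed
  then show ?thesis
    using v by (intro exI[of _ v]) auto
qed

lemma endo_factorization:
  assumes \<mu>: "\<mu> \<in> hom ar (W ar E X) H" and \<nu>: "\<nu> \<in> hom ar (W ar E X) H"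
    and t: "\<forall>x\<in>X. wf_trm ar X\<^sub>0 (t x) \<and> \<theta> (cls ar E X\<^sub>0 (t x)) = \<nu> (gen X x)"
    and g: "\<forall>n\<in>X\<^sub>0. g n \<in> carrier H" "\<forall>x\<in>X. \<mu> (gen X x) = eval H g (t x)"
  obtains \<psi> where "\<psi> \<in> hom ar H H" "\<forall>c\<in>carrier (W ar E X). \<psi> (\<nu> c) = \<mu> c"
proof -
  obtain \<psi> where \<psi>: "\<psi> \<in> hom ar H H" "\<And>t. wf_trm ar X\<^sub>0 t \<Longrightarrow> \<psi> (\<theta> (cls ar E X\<^sub>0 t)) = eval H g t"
    using endo_from_assignment[OF g(1)] by blast
  have "\<forall>x\<in>X. hcomp (W ar E X) \<nu> \<psi> (gen X x) = \<mu> (gen X x)"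
  proof
    fix x assume x: "x \<in> X"
    have "hcomp (W ar E X) \<nu> \<psi> (gen X x) = \<psi> (\<theta> (cls ar E X\<^sub>0 (t x)))"
      using t x gen_carrier[OF x] by (simp add: hcomp_def)
    also have "\<dots> = eval H g (t x)"
      by (rule \<psi>(2)) (use t x in blast)
    also have "\<dots> = \<mu> (gen X x)"
      using g(2) x by simp
    finally show "hcomp (W ar E X) \<nu> \<psi> (gen X x) = \<mu> (gen X x)" .
  qed
  then have "hcomp (W ar E X) \<nu> \<psi> c = \<mu> c" if "c \<in> carrier (W ar E X)" for c
    using hom_W_eqI[OF hcomp_hom[OF \<nu> \<psi>(1) W_closed] \<mu> _ that] by blast
  then show ?thesis
    using that \<psi>(1) by (simp add: hcomp_def)
qed

lemma LKer_subset_imp_endo: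
  assumes "finite X" and \<mu>: "\<mu> \<in> hom ar (W ar E X) H" and \<nu>: "\<nu> \<in> hom ar (W ar E X) H"
    and "LKer ar E H X \<nu> \<subseteq> LKer ar E H X \<mu>"
  obtains \<psi> where "\<psi> \<in> hom ar H H" "\<forall>c\<in>carrier (W ar E X). \<psi> (\<nu> c) = \<mu> c"
proof (cases "X = {}")
  case True
  then have "\<nu> = \<mu>"
    using hom_W_ext[OF \<nu> \<mu>] by simp
  then show ?thesis
    using that[OF restrict_id_hom[OF closed_H]] hom_carrier[OF \<mu>] by simp
next
  case False
  have "\<forall>x\<in>X. \<exists>t. wf_trm ar X\<^sub>0 t \<and> \<theta> (cls ar E X\<^sub>0 t) = \<nu> (gen X x)"
    using carrier_H_term hom_carrier[OF \<nu> gen_carrier] by blast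
  then obtain t where t: "\<forall>x\<in>X. wf_trm ar X\<^sub>0 (t x) \<and> \<theta> (cls ar E X\<^sub>0 (t x)) = \<nu> (gen X x)"
    by (rule bchoice[THEN exE])
  obtain v where v: "phi ar E X v" "\<And>\<kappa>. \<kappa> \<in> val ar E H X v \<longleftrightarrow> \<kappa> \<in> hom ar (W ar E X) H \<and>
      (\<exists>g. (\<forall>n\<in>X\<^sub>0. g n \<in> carrier H) \<and> (\<forall>x\<in>X. \<kappa> (gen X x) = eval H g (t x)))"
    using term_image_formula[OF assms(1) False] t by blast
  have "\<nu> (gen X x) = eval H (\<lambda>n. \<theta> (gen X\<^sub>0 n)) (t x)" if x: "x \<in> X" for x
  proof -
    have "\<nu> (gen X x) = \<theta> (cls ar E X\<^sub>0 (t x))"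
      using t x by simp
    also have "\<dots> = eval H (\<lambda>n. \<theta> (gen X\<^sub>0 n)) (t x)"
      by (rule hom_W_eval[OF \<theta>_hom]) (use t x in blast)
    finally show ?thesis .
  qed
  then have "\<exists>g. (\<forall>n\<in>X\<^sub>0. g n \<in> carrier H) \<and> (\<forall>x\<in>X. \<nu> (gen X x) = eval H g (t x))"
    using hom_carrier[OF \<theta>_hom gen_carrier] by (intro exI[of _ "\<lambda>n. \<theta> (gen X\<^sub>0 n)"]) blast
  then have "\<nu> \<in> val ar E H X v"
    using v(2) \<nu> by blast
  then have "\<mu> \<in> val ar E H X v"
    using v(1) assms(4) unfolding LKer_def by auto
  then obtain g where "\<forall>n\<in>X\<^sub>0. g n \<in> carrier H" "\<forall>x\<in>X. \<mu> (gen X x) = eval H g (t x)"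
    using v(2) by blast
  then show ?thesis
    using endo_factorization[OF \<mu> \<nu> t] that by blast
qed

lemma logically_perfect_if_weakly_homogeneous:
  assumes "weakly_homogeneous ar H"
  shows "logically_perfect ar E H"
  unfolding logically_perfect_def
proof (intro allI impI ballI)
  fix X \<mu> \<nu>
  assume "finite X" and \<mu>: "\<mu> \<in> hom ar (W ar E X) H" and \<nu>: "\<nu> \<in> hom ar (W ar E X) H"
    and "LKer ar E H X \<mu> = LKer ar E H X \<nu>"
  obtain \<psi>\<^sub>1 where \<psi>\<^sub>1: "\<psi>\<^sub>1 \<in> hom ar H H" "\<forall>c\<in>carrier (W ar E X). \<psi>\<^sub>1 (\<nu> c) = \<mu> c"
    using LKer_subset_imp_endo[OF \<open>finite X\<close> \<mu> \<nu>] \<open>LKer ar E H X \<mu> = _\<close> by blast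
  obtain \<psi>\<^sub>2 where \<psi>\<^sub>2: "\<psi>\<^sub>2 \<in> hom ar H H" "\<forall>c\<in>carrier (W ar E X). \<psi>\<^sub>2 (\<mu> c) = \<nu> c"
    using LKer_subset_imp_endo[OF \<open>finite X\<close> \<nu> \<mu>] \<open>LKer ar E H X \<mu> = _\<close> by blast
  have "\<psi>\<^sub>1 ` \<nu> ` carrier (W ar E X) = \<mu> ` carrier (W ar E X)"
    using \<psi>\<^sub>1(2) by (force simp: image_image)
  then have "fg_subalg ar H (\<psi>\<^sub>1 ` \<nu> ` carrier (W ar E X))"
    using fg_subalg_hom_image[OF \<open>finite X\<close> \<mu>] by simp
  then obtain \<psi> where "automorphism ar H \<psi>" "\<forall>b\<in>\<nu> ` carrier (W ar E X). \<psi> b = \<psi>\<^sub>1 b"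
    using weakly_homogeneous_automorphism[OF assms closed_H fg_subalg_hom_image[OF \<open>finite X\<close> \<nu>]
        _ \<psi>\<^sub>1(1) \<psi>\<^sub>2(1)] \<psi>\<^sub>1(2) \<psi>\<^sub>2(2) by auto
  then show "\<exists>\<phi>. automorphism ar H \<phi> \<and> (\<forall>w\<in>carrier (W ar E X). \<mu> w = \<phi> (\<nu> w))"
    using \<psi>\<^sub>1(2) by auto
qed

end

theorem mainTheorem2:
  fixes ar :: "'f \<Rightarrow> nat" and E :: "('f trm \<times> 'f trm) set"
    and H :: "('f, 'a) alg" and X0 :: "nat set"
  assumes "\<forall>(l, r) \<in> E. wf_trm ar UNIV l \<and> wf_trm ar UNIV r"
    and "finite X0"
    and "iso ar (W ar E X0) H \<noteq> {}"
    and "weakly_homogeneous ar H"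
  shows "logically_perfect ar E H"
proof -
  obtain \<theta> where "\<theta> \<in> iso ar (W ar E X0) H"
    using assms(3) by blast
  then interpret free_algebra_iso ar E H X0 \<theta>
    using assms(2) by unfold_locales
  show ?thesis
    using logically_perfect_if_weakly_homogeneous[OF assms(4)] .
qed

end
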